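(* Let $A$ be a reversible $JW$-algebra with a faithful normal state $\rho$, and let $\{x_n\}\subset A$ satisfy $\sum_{n=1}^\infty\rho(|x_n|^2)<\infty$. Then $x_n$ is bundle convergent to $0$ in $A$.
   Context: A $JW$-algebra is a real linear space of self-adjoint operators in $B(H)$ ($H$ a complex Hilbert space), containing the identity ${\bf 1}$, closed under the Jordan product $a\circ b=\frac12(ab+ba)$ and closed in the weak operator topology; it is reversible if $a_1a_2\cdots a_n+a_na_{n-1}\cdots a_1\in A$ whenever $a_1,\dots,a_n\in A$. For $D_m\in A^+$ with $\sum_m\rho(D_m)<\infty$, the bundle is $\mathcal{P}_{(D_m)}=\{p\in A \text{ a projection}: p\neq 0,\ \sup_m\|p(\sum_{k=1}^m D_k)p\|<\infty,\ \|pD_mp\|\to0\}$. A sequence $x_n\in A$ is bundle convergent to $x\in A$ in $A$ if there is a bundle $\mathcal{P}_{(D_m)}$ (with $D_m\in A^+$, $\sum_m\rho(D_m)<\infty$) such that $\|p(x_n-x)^2p\|\to0$ for every $p\in\mathcal{P}_{(D_m)}$. *)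

theory Defs
  imports "HOL-Analysis.Analysis"
begin

class chilbert = banach +
  fixes scaleC :: "complex \<Rightarrow> 'a \<Rightarrow> 'a"
    and cinner :: "'a \<Rightarrow> 'a \<Rightarrow> complex"
  assumes scaleC_add_right: "scaleC c (x + y) = scaleC c x + scaleC c y"
    and scaleC_add_left: "scaleC (c + d) x = scaleC c x + scaleC d x"
    and scaleC_scaleC: "scaleC c (scaleC d x) = scaleC (c * d) x"
    and scaleC_one: "scaleC 1 x = x"
    and scaleR_scaleC: "scaleR r x = scaleC (complex_of_real r) x"
    and cinner_commute: "cinner x y = cnj (cinner y x)"
    and cinner_add_left: "cinner (x + y) z = cinner x z + cinner y z"
    and cinner_scaleC_left: "cinner (scaleC c x) y = cnj c * cinner x y"
    and cinner_ge_zero: "0 \<le> Re (cinner x x)"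
    and cinner_eq_zero_iff: "cinner x x = 0 \<longleftrightarrow> x = 0"
    and norm_cinner: "norm x = sqrt (Re (cinner x x))"

definition bop :: "('h::chilbert \<Rightarrow> 'h) \<Rightarrow> bool" where
  "bop T \<longleftrightarrow> (\<forall>x y. T (x + y) = T x + T y) \<and> (\<forall>c x. T (scaleC c x) = scaleC c (T x))
     \<and> (\<exists>K. \<forall>x. norm (T x) \<le> K * norm x)"

definition selfadj :: "('h::chilbert \<Rightarrow> 'h) \<Rightarrow> bool" where
  "selfadj T \<longleftrightarrow> bop T \<and> (\<forall>x y. cinner (T x) y = cinner x (T y))"

definition ople :: "('h::chilbert \<Rightarrow> 'h) \<Rightarrow> ('h \<Rightarrow> 'h) \<Rightarrow> bool" where
  "ople a b \<longleftrightarrow> (\<forall>x. Re (cinner x (a x)) \<le> Re (cinner x (b x)))"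

definition jordan :: "('h::chilbert \<Rightarrow> 'h) \<Rightarrow> ('h \<Rightarrow> 'h) \<Rightarrow> ('h \<Rightarrow> 'h)" where
  "jordan a b = (\<lambda>x. (1/2) *\<^sub>R (a (b x) + b (a x)))"

text \<open>Closedness (relative to B(H)) in the weak operator topology, via convergent nets
(nets are represented by filters on the operator space).\<close>
definition wot_closed :: "('h::chilbert \<Rightarrow> 'h) set \<Rightarrow> bool" where
  "wot_closed A \<longleftrightarrow> (\<forall>(F :: ('h \<Rightarrow> 'h) filter) T.
      F \<noteq> bot \<longrightarrow> eventually (\<lambda>S. S \<in> A) F \<longrightarrow> bop T \<longrightarrow>
      (\<forall>x y. ((\<lambda>S. cinner (S x) y) \<longlongrightarrow> cinner (T x) y) F) \<longrightarrow> T \<in> A)"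

definition jw_algebra :: "('h::chilbert \<Rightarrow> 'h) set \<Rightarrow> bool" where
  "jw_algebra A \<longleftrightarrow> A \<subseteq> {T. selfadj T} \<and> id \<in> A \<and> (\<lambda>x. 0) \<in> A
     \<and> (\<forall>a\<in>A. \<forall>b\<in>A. (\<lambda>x. a x + b x) \<in> A)
     \<and> (\<forall>a\<in>A. \<forall>r::real. (\<lambda>x. r *\<^sub>R a x) \<in> A)
     \<and> (\<forall>a\<in>A. \<forall>b\<in>A. jordan a b \<in> A)
     \<and> wot_closed A"

definition reversible :: "('h::chilbert \<Rightarrow> 'h) set \<Rightarrow> bool" where
  "reversible A \<longleftrightarrow> (\<forall>as. as \<noteq> [] \<longrightarrow> set as \<subseteq> A \<longrightarrow>
      (\<lambda>x. foldr (\<circ>) as id x + foldr (\<circ>) (rev as) id x) \<in> A)"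

definition positive_part :: "('h::chilbert \<Rightarrow> 'h) set \<Rightarrow> ('h \<Rightarrow> 'h) set" where
  "positive_part A = {a \<in> A. \<forall>x. 0 \<le> Re (cinner x (a x))}"

definition state :: "('h::chilbert \<Rightarrow> 'h) set \<Rightarrow> (('h \<Rightarrow> 'h) \<Rightarrow> real) \<Rightarrow> bool" where
  "state A \<rho> \<longleftrightarrow> (\<forall>a\<in>A. \<forall>b\<in>A. \<rho> (\<lambda>x. a x + b x) = \<rho> a + \<rho> b)
     \<and> (\<forall>a\<in>A. \<forall>r. \<rho> (\<lambda>x. r *\<^sub>R a x) = r * \<rho> a)
     \<and> (\<forall>a\<in>positive_part A. 0 \<le> \<rho> a) \<and> \<rho> id = 1"

definition faithful :: "('h::chilbert \<Rightarrow> 'h) set \<Rightarrow> (('h \<Rightarrow> 'h) \<Rightarrow> real) \<Rightarrow> bool" where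
  "faithful A \<rho> \<longleftrightarrow> (\<forall>a\<in>positive_part A. \<rho> a = 0 \<longrightarrow> a = (\<lambda>x. 0))"

text \<open>An increasing net is represented by its range D (upward directed); its supremum is the
least upper bound of D among the bounded self-adjoint operators.\<close>
definition normal :: "('h::chilbert \<Rightarrow> 'h) set \<Rightarrow> (('h \<Rightarrow> 'h) \<Rightarrow> real) \<Rightarrow> bool" where
  "normal A \<rho> \<longleftrightarrow> (\<forall>D a. D \<subseteq> A \<longrightarrow> D \<noteq> {} \<longrightarrow>
      (\<forall>d1\<in>D. \<forall>d2\<in>D. \<exists>d\<in>D. ople d1 d \<and> ople d2 d) \<longrightarrow>
      a \<in> A \<longrightarrow> (\<forall>d\<in>D. ople d a) \<longrightarrow>
      (\<forall>b. selfadj b \<longrightarrow> (\<forall>d\<in>D. ople d b) \<longrightarrow> ople a b) \<longrightarrow>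
      \<rho> a = (SUP d\<in>D. \<rho> d))"

definition faithful_normal_state :: "('h::chilbert \<Rightarrow> 'h) set \<Rightarrow> (('h \<Rightarrow> 'h) \<Rightarrow> real) \<Rightarrow> bool" where
  "faithful_normal_state A \<rho> \<longleftrightarrow> state A \<rho> \<and> faithful A \<rho> \<and> normal A \<rho>"

definition is_projection :: "('h::chilbert \<Rightarrow> 'h) set \<Rightarrow> ('h \<Rightarrow> 'h) \<Rightarrow> bool" where
  "is_projection A p \<longleftrightarrow> p \<in> A \<and> p \<circ> p = p"

text \<open>The bundle P_(D_m); sequences are indexed from 0 instead of 1.\<close>
definition jw_bundle :: "('h::chilbert \<Rightarrow> 'h) set \<Rightarrow> (nat \<Rightarrow> ('h \<Rightarrow> 'h)) \<Rightarrow> ('h \<Rightarrow> 'h) set" where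
  "jw_bundle A D = {p. is_projection A p \<and> p \<noteq> (\<lambda>x. 0)
      \<and> bdd_above (range (\<lambda>m. onorm (p \<circ> (\<lambda>x. \<Sum>k\<le>m. D k x) \<circ> p)))
      \<and> (\<lambda>m. onorm (p \<circ> D m \<circ> p)) \<longlonglongrightarrow> 0}"

definition bundle_convergent ::
  "('h::chilbert \<Rightarrow> 'h) set \<Rightarrow> (('h \<Rightarrow> 'h) \<Rightarrow> real) \<Rightarrow> (nat \<Rightarrow> ('h \<Rightarrow> 'h)) \<Rightarrow> ('h \<Rightarrow> 'h) \<Rightarrow> bool" where
  "bundle_convergent A \<rho> x y \<longleftrightarrow> (\<exists>D. (\<forall>m. D m \<in> positive_part A) \<and> summable (\<lambda>m. \<rho> (D m))
      \<and> (\<forall>p\<in>jw_bundle A D.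
           (\<lambda>n. onorm (p \<circ> (\<lambda>z. x n z - y z) \<circ> (\<lambda>z. x n z - y z) \<circ> p)) \<longlonglongrightarrow> 0))"

end

theory Submission
  imports Defs
begin

text \<open>Take the bundle generated by the squares themselves, \<open>D\<^sub>m = x\<^sub>m\<^sup>2\<close>: they are
positive and \<open>\<Sum>\<rho>(D\<^sub>m) < \<infinity>\<close>, and every projection \<open>p\<close> of that bundle satisfies
\<open>\<parallel>p x\<^sub>m\<^sup>2 p\<parallel> \<rightarrow> 0\<close> by the very definition of the bundle.\<close>

lemma jordan_self: "jordan a a = a \<circ> a"
  by (rule ext) (simp add: jordan_def scaleR_2[symmetric])

lemma jw_algebra_square_mem:
  assumes "jw_algebra A" and "a \<in> A"
  shows "a \<circ> a \<in> A"
  using assms jordan_self unfolding jw_algebra_def by metis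

lemma selfadj_square_nonneg:
  assumes "selfadj a"
  shows "0 \<le> Re (cinner z ((a \<circ> a) z))"
proof -
  have "cinner z (a (a z)) = cinner (a z) (a z)"
    using assms unfolding selfadj_def by metis
  then show ?thesis
    using cinner_ge_zero by simp
qed

lemma jw_algebra_square_positive:
  assumes "jw_algebra A" and "a \<in> A"
  shows "a \<circ> a \<in> positive_part A"
proof -
  have "selfadj a"
    using assms unfolding jw_algebra_def by blast
  then show ?thesis
    using jw_algebra_square_mem[OF assms] selfadj_square_nonneg
    unfolding positive_part_def by blast
qed

lemma jw_bundle_compress_tendsto_zero:
  assumes "p \<in> jw_bundle A D"
  shows "(\<lambda>m. onorm (p \<circ> D m \<circ> p)) \<longlonglongrightarrow> 0"
  using assms unfolding jw_bundle_def by blast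

lemma bundle_convergent_zeroI:
  assumes "\<And>n. x n \<circ> x n \<in> positive_part A"
    and "summable (\<lambda>n. \<rho> (x n \<circ> x n))"
  shows "bundle_convergent A \<rho> x (\<lambda>z. 0)"
proof -
  have "(\<lambda>n. onorm (p \<circ> (\<lambda>z. x n z - 0) \<circ> (\<lambda>z. x n z - 0) \<circ> p)) \<longlonglongrightarrow> 0"
    if "p \<in> jw_bundle A (\<lambda>n. x n \<circ> x n)" for p
    using jw_bundle_compress_tendsto_zero[OF that] by (simp add: comp_def)
  then show ?thesis
    unfolding bundle_convergent_def using assms
    by (intro exI[of _ "\<lambda>n. x n \<circ> x n"]) blast
qed

theorem proposition3p8:
  fixes A :: "('h::chilbert \<Rightarrow> 'h) set"
    and \<rho> :: "('h \<Rightarrow> 'h) \<Rightarrow> real"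
    and x :: "nat \<Rightarrow> ('h \<Rightarrow> 'h)"
  assumes "jw_algebra A" and "reversible A"
    and "faithful_normal_state A \<rho>"
    and "\<And>n. x n \<in> A"
    and "summable (\<lambda>n. \<rho> (x n \<circ> x n))"
  shows "bundle_convergent A \<rho> x (\<lambda>z. 0)"
  using jw_algebra_square_positive[OF assms(1,4)] assms(5)
  by (rule bundle_convergent_zeroI)

end
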